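(* Let $U,V\subseteq X$ be Scott-open subdcpos of a dcpo $X$, and let $U\wedge V$ and $U\vee V$ be the Scott-open subdcpos with characteristic maps $\phi_U\wedge\phi_V$ and $\phi_U\vee\phi_V$. Then the commutative square of inclusions $U\wedge V\to U$, $U\wedge V\to V$, $U\to U\vee V$, $V\to U\vee V$ is both a pullback and a pushout in $\mathcal{D}$. (That is, finite unions of Scott-open subobjects in $\mathcal{D}$ are effective.)
   Context: Fix a poset $\mathbb{L}$ with finite meets; work internally in $\widehat{\mathbb{L}}=[\mathbb{L}^{op},\mathbf{Set}]$. $\mathcal{D}$ is the category of dcpos (posets with suprema of inhabited directed subsets) and continuous (directed-sup-preserving) maps. $\Sigma$ is the Sierpiński dcpo with carrier $\Omega$ ordered by implication. A Scott-open subdcpo of $A$ is $\{x\mid\phi(x)\}$ with the order induced from $A$, for a continuous characteristic map $\phi:A\to\Sigma$. *)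

theory Defs
  imports Main
begin

text \<open>Internal posets/dcpos in the presheaf topos [L^op, Set], described externally
  (Kripke-Joyal unfolding).  An object is a triple (carrier, restriction, order):
  carrier p = X(p); restriction p q x = x restricted along q \<le> p; order p x y = (x \<le> y) at stage p.\<close>

type_synonym ('l, 'a) pobj =
  "('l \<Rightarrow> 'a set) \<times> ('l \<Rightarrow> 'l \<Rightarrow> 'a \<Rightarrow> 'a) \<times> ('l \<Rightarrow> 'a \<Rightarrow> 'a \<Rightarrow> bool)"

definition car :: "('l, 'a) pobj \<Rightarrow> 'l \<Rightarrow> 'a set" where
  "car A = fst A"
definition rs :: "('l, 'a) pobj \<Rightarrow> 'l \<Rightarrow> 'l \<Rightarrow> 'a \<Rightarrow> 'a" where
  "rs A = fst (snd A)"
definition le :: "('l, 'a) pobj \<Rightarrow> 'l \<Rightarrow> 'a \<Rightarrow> 'a \<Rightarrow> bool" where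
  "le A = snd (snd A)"

definition is_presheaf :: "('l::order, 'a) pobj \<Rightarrow> bool" where
  "is_presheaf A \<longleftrightarrow>
     (\<forall>p q x. q \<le> p \<and> x \<in> car A p \<longrightarrow> rs A p q x \<in> car A q) \<and>
     (\<forall>p x. x \<in> car A p \<longrightarrow> rs A p p x = x) \<and>
     (\<forall>p q s x. s \<le> q \<and> q \<le> p \<and> x \<in> car A p \<longrightarrow> rs A q s (rs A p q x) = rs A p s x)"

definition is_iposet :: "('l::order, 'a) pobj \<Rightarrow> bool" where
  "is_iposet A \<longleftrightarrow> is_presheaf A \<and>
     (\<forall>p x y. le A p x y \<longrightarrow> x \<in> car A p \<and> y \<in> car A p) \<and>
     (\<forall>p q x y. q \<le> p \<and> le A p x y \<longrightarrow> le A q (rs A p q x) (rs A p q y)) \<and>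
     (\<forall>p x. x \<in> car A p \<longrightarrow> le A p x x) \<and>
     (\<forall>p x y z. le A p x y \<and> le A p y z \<longrightarrow> le A p x z) \<and>
     (\<forall>p x y. le A p x y \<and> le A p y x \<longrightarrow> x = y)"

text \<open>An element of the power object P(A) at stage q: a subpresheaf of A restricted to the down-set of q.\<close>
definition sub_on :: "('l::order, 'a) pobj \<Rightarrow> 'l \<Rightarrow> ('l \<Rightarrow> 'a set) \<Rightarrow> bool" where
  "sub_on A q D \<longleftrightarrow> (\<forall>r. r \<le> q \<longrightarrow> D r \<subseteq> car A r) \<and>
     (\<forall>r s x. s \<le> r \<and> r \<le> q \<and> x \<in> D r \<longrightarrow> rs A r s x \<in> D s)"

definition dir_inh :: "('l::order, 'a) pobj \<Rightarrow> 'l \<Rightarrow> ('l \<Rightarrow> 'a set) \<Rightarrow> bool" where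
  "dir_inh A q D \<longleftrightarrow> D q \<noteq> {} \<and>
     (\<forall>r x y. r \<le> q \<and> x \<in> D r \<and> y \<in> D r \<longrightarrow> (\<exists>z\<in>D r. le A r x z \<and> le A r y z))"

definition is_ub :: "('l::order, 'a) pobj \<Rightarrow> 'l \<Rightarrow> ('l \<Rightarrow> 'a set) \<Rightarrow> 'a \<Rightarrow> bool" where
  "is_ub A q D u \<longleftrightarrow> u \<in> car A q \<and> (\<forall>r x. r \<le> q \<and> x \<in> D r \<longrightarrow> le A r x (rs A q r u))"

definition is_sup :: "('l::order, 'a) pobj \<Rightarrow> 'l \<Rightarrow> ('l \<Rightarrow> 'a set) \<Rightarrow> 'a \<Rightarrow> bool" where
  "is_sup A q D s \<longleftrightarrow> is_ub A q D s \<and>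
     (\<forall>r u. r \<le> q \<and> is_ub A r D u \<longrightarrow> le A r (rs A q r s) u)"

definition is_dcpo :: "('l::order, 'a) pobj \<Rightarrow> bool" where
  "is_dcpo A \<longleftrightarrow> is_iposet A \<and>
     (\<forall>q D. sub_on A q D \<and> dir_inh A q D \<longrightarrow> (\<exists>s. is_sup A q D s))"

definition is_morph :: "('l::order, 'a) pobj \<Rightarrow> ('l, 'b) pobj \<Rightarrow> ('l \<Rightarrow> 'a \<Rightarrow> 'b) \<Rightarrow> bool" where
  "is_morph A B f \<longleftrightarrow> (\<forall>p x. x \<in> car A p \<longrightarrow> f p x \<in> car B p) \<and>
     (\<forall>p q x. q \<le> p \<and> x \<in> car A p \<longrightarrow> f q (rs A p q x) = rs B p q (f p x))"

definition continuous_D :: "('l::order, 'a) pobj \<Rightarrow> ('l, 'b) pobj \<Rightarrow> ('l \<Rightarrow> 'a \<Rightarrow> 'b) \<Rightarrow> bool" where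
  "continuous_D A B f \<longleftrightarrow> is_morph A B f \<and>
     (\<forall>q D s. sub_on A q D \<and> dir_inh A q D \<and> is_sup A q D s \<longrightarrow>
        is_sup B q (\<lambda>r. f r ` D r) (f q s))"

definition meq :: "('l, 'a) pobj \<Rightarrow> ('l \<Rightarrow> 'a \<Rightarrow> 'b) \<Rightarrow> ('l \<Rightarrow> 'a \<Rightarrow> 'b) \<Rightarrow> bool" where
  "meq A f g \<longleftrightarrow> (\<forall>p. \<forall>x\<in>car A p. f p x = g p x)"

definition mcomp :: "('l \<Rightarrow> 'b \<Rightarrow> 'c) \<Rightarrow> ('l \<Rightarrow> 'a \<Rightarrow> 'b) \<Rightarrow> 'l \<Rightarrow> 'a \<Rightarrow> 'c" where
  "mcomp g f = (\<lambda>p x. g p (f p x))"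

definition mid :: "'l \<Rightarrow> 'a \<Rightarrow> 'a" where
  "mid = (\<lambda>p x. x)"

text \<open>The Sierpinski dcpo: carrier Omega (sieves on p), restriction by intersection, order = inclusion.\<close>
definition Sig :: "('l::order, 'l set) pobj" where
  "Sig = ((\<lambda>p. {S. S \<subseteq> {q. q \<le> p} \<and> (\<forall>a b. a \<in> S \<and> b \<le> a \<longrightarrow> b \<in> S)}),
          (\<lambda>p q S. {s \<in> S. s \<le> q}),
          (\<lambda>p S T. S \<subseteq> T \<and> S \<subseteq> {q. q \<le> p} \<and> (\<forall>a b. a \<in> S \<and> b \<le> a \<longrightarrow> b \<in> S)
                           \<and> T \<subseteq> {q. q \<le> p} \<and> (\<forall>a b. a \<in> T \<and> b \<le> a \<longrightarrow> b \<in> T)))"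

text \<open>Scott-open subdcpo {x | phi x} with induced order; phi x holds at stage p iff p \<in> phi p x.\<close>
definition sub_obj :: "('l::order, 'a) pobj \<Rightarrow> ('l \<Rightarrow> 'a \<Rightarrow> 'l set) \<Rightarrow> ('l, 'a) pobj" where
  "sub_obj X phi = ((\<lambda>p. {x \<in> car X p. p \<in> phi p x}), rs X,
      (\<lambda>p x y. le X p x y \<and> p \<in> phi p x \<and> p \<in> phi p y))"

definition is_pullback_D :: "'z itself \<Rightarrow> ('l::order, 'p) pobj \<Rightarrow> ('l, 'a) pobj \<Rightarrow> ('l, 'b) pobj \<Rightarrow> ('l, 'c) pobj
    \<Rightarrow> ('l \<Rightarrow> 'p \<Rightarrow> 'a) \<Rightarrow> ('l \<Rightarrow> 'p \<Rightarrow> 'b) \<Rightarrow> ('l \<Rightarrow> 'a \<Rightarrow> 'c) \<Rightarrow> ('l \<Rightarrow> 'b \<Rightarrow> 'c) \<Rightarrow> bool" where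
  "is_pullback_D _ P A B C pa pb fa fb \<longleftrightarrow>
     is_dcpo P \<and> is_dcpo A \<and> is_dcpo B \<and> is_dcpo C \<and>
     continuous_D P A pa \<and> continuous_D P B pb \<and> continuous_D A C fa \<and> continuous_D B C fb \<and>
     meq P (mcomp fa pa) (mcomp fb pb) \<and>
     (\<forall>(Z::('l, 'z) pobj) za zb. is_dcpo Z \<and> continuous_D Z A za \<and> continuous_D Z B zb \<and>
        meq Z (mcomp fa za) (mcomp fb zb) \<longrightarrow>
        (\<exists>h. continuous_D Z P h \<and> meq Z (mcomp pa h) za \<and> meq Z (mcomp pb h) zb \<and>
           (\<forall>h'. continuous_D Z P h' \<and> meq Z (mcomp pa h') za \<and> meq Z (mcomp pb h') zb
                 \<longrightarrow> meq Z h h')))"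

definition is_pushout_D :: "'z itself \<Rightarrow> ('l::order, 'p) pobj \<Rightarrow> ('l, 'a) pobj \<Rightarrow> ('l, 'b) pobj \<Rightarrow> ('l, 'c) pobj
    \<Rightarrow> ('l \<Rightarrow> 'p \<Rightarrow> 'a) \<Rightarrow> ('l \<Rightarrow> 'p \<Rightarrow> 'b) \<Rightarrow> ('l \<Rightarrow> 'a \<Rightarrow> 'c) \<Rightarrow> ('l \<Rightarrow> 'b \<Rightarrow> 'c) \<Rightarrow> bool" where
  "is_pushout_D _ P A B C pa pb fa fb \<longleftrightarrow>
     is_dcpo P \<and> is_dcpo A \<and> is_dcpo B \<and> is_dcpo C \<and>
     continuous_D P A pa \<and> continuous_D P B pb \<and> continuous_D A C fa \<and> continuous_D B C fb \<and>
     meq P (mcomp fa pa) (mcomp fb pb) \<and>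
     (\<forall>(Z::('l, 'z) pobj) za zb. is_dcpo Z \<and> continuous_D A Z za \<and> continuous_D B Z zb \<and>
        meq P (mcomp za pa) (mcomp zb pb) \<longrightarrow>
        (\<exists>h. continuous_D C Z h \<and> meq A (mcomp h fa) za \<and> meq B (mcomp h fb) zb \<and>
           (\<forall>h'. continuous_D C Z h' \<and> meq A (mcomp h' fa) za \<and> meq B (mcomp h' fb) zb
                 \<longrightarrow> meq C h h')))"

end

theory Submission
  imports Defs
begin

(* A characteristic map phi into Sigma is monotone, so {x | phi x} is closed under the directed
   suprema of X and is a sub-dcpo with the induced order. Hence all four inclusions are continuous,
   and the square is a pullback because U \<inter> V is, stagewise, the intersection of U and V.
   For the pushout, continuous maps on U and V that agree on U \<inter> V glue to a map h on U \<union> V.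
   Its continuity is where Scott-openness enters: if the supremum s of a directed family D lies in U,
   continuity of phi_U into Sigma forces a member of D at the same stage into U. By directedness the
   members of D lying in U are then cofinal in D, so both have the supremum s, and on that part h
   agrees with the continuous map on U. *)

section \<open>Internal posets and dcpos\<close>

lemma presheaf_rs_car: "is_presheaf A \<Longrightarrow> q \<le> p \<Longrightarrow> x \<in> car A p \<Longrightarrow> rs A p q x \<in> car A q"
  unfolding is_presheaf_def by metis

lemma presheaf_rs_id: "is_presheaf A \<Longrightarrow> x \<in> car A p \<Longrightarrow> rs A p p x = x"
  unfolding is_presheaf_def by metis

lemma presheaf_rs_rs:
  "is_presheaf A \<Longrightarrow> s \<le> q \<Longrightarrow> q \<le> p \<Longrightarrow> x \<in> car A p \<Longrightarrow> rs A q s (rs A p q x) = rs A p s x"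
  unfolding is_presheaf_def by metis

lemma iposet_presheaf: "is_iposet A \<Longrightarrow> is_presheaf A"
  unfolding is_iposet_def by metis

lemma iposet_le_car: "is_iposet A \<Longrightarrow> le A p x y \<Longrightarrow> x \<in> car A p \<and> y \<in> car A p"
  unfolding is_iposet_def by metis

lemma iposet_le_rs: "is_iposet A \<Longrightarrow> q \<le> p \<Longrightarrow> le A p x y \<Longrightarrow> le A q (rs A p q x) (rs A p q y)"
  unfolding is_iposet_def by metis

lemma iposet_refl: "is_iposet A \<Longrightarrow> x \<in> car A p \<Longrightarrow> le A p x x"
  unfolding is_iposet_def by metis

lemma iposet_trans: "is_iposet A \<Longrightarrow> le A p x y \<Longrightarrow> le A p y z \<Longrightarrow> le A p x z"
  unfolding is_iposet_def by metis

lemma iposet_antisym: "is_iposet A \<Longrightarrow> le A p x y \<Longrightarrow> le A p y x \<Longrightarrow> x = y"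
  unfolding is_iposet_def by metis

lemma dcpo_iposet: "is_dcpo A \<Longrightarrow> is_iposet A"
  unfolding is_dcpo_def by blast

lemma morph_car: "is_morph A B f \<Longrightarrow> x \<in> car A p \<Longrightarrow> f p x \<in> car B p"
  unfolding is_morph_def by blast

lemma morph_rs: "is_morph A B f \<Longrightarrow> q \<le> p \<Longrightarrow> x \<in> car A p \<Longrightarrow> f q (rs A p q x) = rs B p q (f p x)"
  unfolding is_morph_def by blast

lemma continuous_D_morph: "continuous_D A B f \<Longrightarrow> is_morph A B f"
  unfolding continuous_D_def by blast

lemma continuous_D_sup: "continuous_D A B f \<Longrightarrow> sub_on A q D \<Longrightarrow> dir_inh A q D \<Longrightarrow> is_sup A q D s
    \<Longrightarrow> is_sup B q (\<lambda>r. f r ` D r) (f q s)"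
  unfolding continuous_D_def by blast

lemma mcomp_mid [simp]: "mcomp mid f = f" "mcomp f mid = f"
  by (simp_all add: mcomp_def mid_def)

lemma is_sup_car: "is_sup A q D s \<Longrightarrow> s \<in> car A q"
  unfolding is_sup_def is_ub_def by blast

lemma is_sup_ub: "is_sup A q D s \<Longrightarrow> r \<le> q \<Longrightarrow> x \<in> D r \<Longrightarrow> le A r x (rs A q r s)"
  unfolding is_sup_def is_ub_def by blast

lemma is_sup_least: "is_sup A q D s \<Longrightarrow> r \<le> q \<Longrightarrow> is_ub A r D u \<Longrightarrow> le A r (rs A q r s) u"
  unfolding is_sup_def is_ub_def by blast

lemma sub_on_car: "sub_on A q D \<Longrightarrow> r \<le> q \<Longrightarrow> x \<in> D r \<Longrightarrow> x \<in> car A r"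
  unfolding sub_on_def by blast

lemma sub_on_rs: "sub_on A q D \<Longrightarrow> s \<le> r \<Longrightarrow> r \<le> q \<Longrightarrow> x \<in> D r \<Longrightarrow> rs A r s x \<in> D s"
  unfolding sub_on_def by blast

lemma is_sup_unique:
  assumes A: "is_iposet A" and s: "is_sup A q D s" and t: "is_sup A q D t"
  shows "s = t"
proof -
  have "is_ub A q D s" "is_ub A q D t"
    using s t unfolding is_sup_def by blast+
  then have "le A q s t" "le A q t s"
    using is_sup_least[OF s order_refl] is_sup_least[OF t order_refl]
      presheaf_rs_id[OF iposet_presheaf[OF A] is_sup_car[OF s]]
      presheaf_rs_id[OF iposet_presheaf[OF A] is_sup_car[OF t]] by simp_all
  then show ?thesis
    using iposet_antisym[OF A] by blast
qed

lemma is_sup_of_member: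
  assumes A: "is_presheaf A" and b: "b \<in> car A p"
    and mem: "\<And>r. r \<le> p \<Longrightarrow> rs A p r b \<in> D r"
    and ub: "\<And>r x. r \<le> p \<Longrightarrow> x \<in> D r \<Longrightarrow> le A r x (rs A p r b)"
  shows "is_sup A p D b"
  unfolding is_sup_def
proof (intro conjI allI impI)
  show "is_ub A p D b"
    unfolding is_ub_def using b ub by blast
next
  fix r u assume "r \<le> p \<and> is_ub A r D u"
  then have "le A r (rs A p r b) (rs A r r u)" "u \<in> car A r"
    using mem unfolding is_ub_def by blast+
  then show "le A r (rs A p r b) u"
    using presheaf_rs_id[OF A] by simp
qed

lemma continuous_D_mono:
  assumes A: "is_iposet A" and B: "is_presheaf B" and f: "continuous_D A B f" and ab: "le A p a b"
  shows "le B p (f p a) (f p b)"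
proof -
  note ps = iposet_presheaf[OF A]
  have a: "a \<in> car A p" and b: "b \<in> car A p"
    using iposet_le_car[OF A ab] by auto
  define D where "D = (\<lambda>r. if r \<le> p then {rs A p r a, rs A p r b} else {})"
  have below_b: "le A r x (rs A p r b)" if "r \<le> p" "x \<in> D r" for r x
    using that iposet_le_rs[OF A _ ab] iposet_refl[OF A presheaf_rs_car[OF ps _ b]]
    by (auto simp: D_def)
  have "sub_on A p D"
    unfolding sub_on_def D_def
    using presheaf_rs_car[OF ps _ a] presheaf_rs_car[OF ps _ b]
      presheaf_rs_rs[OF ps _ _ a] presheaf_rs_rs[OF ps _ _ b] order_trans
    by auto
  moreover have "dir_inh A p D"
    unfolding dir_inh_def using below_b by (auto simp: D_def)
  moreover have "is_sup A p D b"
    by (rule is_sup_of_member[OF ps b _ below_b]) (simp add: D_def)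
  ultimately have "is_sup B p (\<lambda>r. f r ` D r) (f p b)"
    using continuous_D_sup[OF f] by blast
  moreover have "f p a \<in> f p ` D p"
    using presheaf_rs_id[OF ps a] by (simp add: D_def)
  moreover have "f p b \<in> car B p"
    using morph_car[OF continuous_D_morph[OF f] b] .
  ultimately show ?thesis
    using is_sup_ub[of B p _ "f p b" p "f p a"] presheaf_rs_id[OF B] by simp
qed

lemma is_ub_cofinal_iff:
  assumes A: "is_iposet A" and sub: "\<And>r. r \<le> q \<Longrightarrow> E' r \<subseteq> E r"
    and cofinal: "\<And>r x. r \<le> q \<Longrightarrow> x \<in> E r \<Longrightarrow> \<exists>z\<in>E' r. le A r x z"
    and "r \<le> q"
  shows "is_ub A r E' u \<longleftrightarrow> is_ub A r E u"
proof
  assume u: "is_ub A r E' u"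
  show "is_ub A r E u"
    unfolding is_ub_def
  proof (intro conjI allI impI)
    show "u \<in> car A r"
      using u unfolding is_ub_def by blast
    fix r' x assume r': "r' \<le> r \<and> x \<in> E r'"
    then obtain z where "z \<in> E' r'" "le A r' x z"
      using cofinal \<open>r \<le> q\<close> order_trans by blast
    then show "le A r' x (rs A r r' u)"
      using u r' iposet_trans[OF A] unfolding is_ub_def by blast
  qed
next
  assume "is_ub A r E u"
  then show "is_ub A r E' u"
    using sub \<open>r \<le> q\<close> order_trans unfolding is_ub_def by blast
qed

lemma is_sup_cofinal_iff:
  assumes A: "is_iposet A" and sub: "\<And>r. r \<le> q \<Longrightarrow> E' r \<subseteq> E r"
    and cofinal: "\<And>r x. r \<le> q \<Longrightarrow> x \<in> E r \<Longrightarrow> \<exists>z\<in>E' r. le A r x z"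
  shows "is_sup A q E' s \<longleftrightarrow> is_sup A q E s"
  unfolding is_sup_def using is_ub_cofinal_iff[OF A sub cofinal] by auto

definition induced_sub :: "('l::order, 'a) pobj \<Rightarrow> ('l, 'a) pobj \<Rightarrow> bool" where
  "induced_sub B A \<longleftrightarrow> (\<forall>p. car B p \<subseteq> car A p) \<and> rs B = rs A \<and>
     (\<forall>p x y. le B p x y \<longleftrightarrow> le A p x y \<and> x \<in> car B p \<and> y \<in> car B p) \<and>
     (\<forall>p q x. q \<le> p \<and> x \<in> car B p \<longrightarrow> rs A p q x \<in> car B q)"

lemma is_sup_induced_sub:
  assumes B: "induced_sub B A" and t: "is_sup A q E t" "t \<in> car B q"
    and E: "\<And>r. r \<le> q \<Longrightarrow> E r \<subseteq> car B r"
  shows "is_sup B q E t"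
proof -
  have le_B: "\<And>p x y. le B p x y \<longleftrightarrow> le A p x y \<and> x \<in> car B p \<and> y \<in> car B p"
    and rs_B: "rs B = rs A" and car_B: "\<And>p. car B p \<subseteq> car A p"
    and rs_car: "\<And>p q x. q \<le> p \<Longrightarrow> x \<in> car B p \<Longrightarrow> rs A p q x \<in> car B q"
    using B unfolding induced_sub_def by (elim conjE; metis)+
  have "is_ub B q E t"
    unfolding is_ub_def
  proof (intro conjI allI impI)
    fix r x assume "r \<le> q \<and> x \<in> E r"
    then show "le B r x (rs B q r t)"
      unfolding le_B rs_B using E rs_car[of r q t] t(2) is_sup_ub[OF t(1)] by blast
  qed fact
  moreover have "le B r (rs B q r t) u" if "r \<le> q" and u: "is_ub B r E u" for r u
  proof -
    have "u \<in> car B r"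
      using u unfolding is_ub_def by blast
    moreover have "is_ub A r E u"
      using u car_B unfolding is_ub_def le_B rs_B by blast
    ultimately show ?thesis
      unfolding le_B rs_B using is_sup_least[OF t(1) \<open>r \<le> q\<close>] rs_car[OF \<open>r \<le> q\<close> t(2)] by blast
  qed
  ultimately show ?thesis
    unfolding is_sup_def by blast
qed

section \<open>Characteristic maps into the Sierpinski dcpo\<close>

lemma car_Sig: "car Sig p = {S. S \<subseteq> {q. q \<le> p} \<and> (\<forall>a b. a \<in> S \<and> b \<le> a \<longrightarrow> b \<in> S)}"
  by (simp add: car_def Sig_def)

lemma rs_Sig: "rs Sig p q S = {s \<in> S. s \<le> q}"
  by (simp add: rs_def Sig_def)

lemma le_Sig: "le Sig p S T \<longleftrightarrow> S \<subseteq> T \<and> S \<in> car Sig p \<and> T \<in> car Sig p"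
  by (auto simp: le_def car_def Sig_def)

lemma presheaf_Sig: "is_presheaf Sig"
  unfolding is_presheaf_def car_Sig rs_Sig
  by (intro conjI allI impI; (elim conjE CollectE)?; blast dest: order_trans)

lemma char_le: "is_morph X Sig phi \<Longrightarrow> x \<in> car X p \<Longrightarrow> r \<in> phi p x \<Longrightarrow> r \<le> p"
  using morph_car[of X Sig phi x p] unfolding car_Sig by blast

lemma char_down: "is_morph X Sig phi \<Longrightarrow> x \<in> car X p \<Longrightarrow> a \<in> phi p x \<Longrightarrow> b \<le> a \<Longrightarrow> b \<in> phi p x"
  using morph_car[of X Sig phi x p] unfolding car_Sig by blast

lemma char_rs:
  "is_morph X Sig phi \<Longrightarrow> q \<le> p \<Longrightarrow> x \<in> car X p \<Longrightarrow> phi q (rs X p q x) = {s \<in> phi p x. s \<le> q}"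
  using morph_rs[of X Sig phi q p x] unfolding rs_Sig by blast

lemma is_morph_Sig_inter:
  assumes "is_morph X Sig phi" "is_morph X Sig psi"
  shows "is_morph X Sig (\<lambda>p x. phi p x \<inter> psi p x)"
  unfolding is_morph_def
proof (intro conjI allI impI)
  fix p x assume x: "x \<in> car X p"
  show "phi p x \<inter> psi p x \<in> car Sig p"
    using char_le[OF assms(1) x] char_down[OF assms(1) x] char_down[OF assms(2) x]
    unfolding car_Sig by blast
next
  fix p q x assume "q \<le> p \<and> x \<in> car X p"
  then show "phi q (rs X p q x) \<inter> psi q (rs X p q x) = rs Sig p q (phi p x \<inter> psi p x)"
    using char_rs[OF assms(1)] char_rs[OF assms(2)] unfolding rs_Sig by auto
qed

lemma is_morph_Sig_union:
  assumes "is_morph X Sig phi" "is_morph X Sig psi"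
  shows "is_morph X Sig (\<lambda>p x. phi p x \<union> psi p x)"
  unfolding is_morph_def
proof (intro conjI allI impI)
  fix p x assume x: "x \<in> car X p"
  show "phi p x \<union> psi p x \<in> car Sig p"
    using char_le[OF assms(1) x] char_le[OF assms(2) x]
      char_down[OF assms(1) x] char_down[OF assms(2) x]
    unfolding car_Sig by blast
next
  fix p q x assume "q \<le> p \<and> x \<in> car X p"
  then show "phi q (rs X p q x) \<union> psi q (rs X p q x) = rs Sig p q (phi p x \<union> psi p x)"
    using char_rs[OF assms(1)] char_rs[OF assms(2)] unfolding rs_Sig by auto
qed

definition upclosed :: "('l::order, 'a) pobj \<Rightarrow> ('l \<Rightarrow> 'a \<Rightarrow> 'l set) \<Rightarrow> bool" where
  "upclosed X phi \<longleftrightarrow> (\<forall>p a b. le X p a b \<and> p \<in> phi p a \<longrightarrow> p \<in> phi p b)"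

lemma upclosedD: "upclosed X phi \<Longrightarrow> le X p a b \<Longrightarrow> p \<in> phi p a \<Longrightarrow> p \<in> phi p b"
  unfolding upclosed_def by blast

lemma upclosed_continuous:
  assumes "is_iposet X" "continuous_D X Sig phi"
  shows "upclosed X phi"
  unfolding upclosed_def
proof (intro allI impI)
  fix p a b assume "le X p a b \<and> p \<in> phi p a"
  moreover have "le X p a b \<Longrightarrow> phi p a \<subseteq> phi p b"
    using continuous_D_mono[OF assms(1) presheaf_Sig assms(2)] unfolding le_Sig by simp
  ultimately show "p \<in> phi p b"
    by blast
qed

lemma upclosed_inter: "upclosed X phi \<Longrightarrow> upclosed X psi \<Longrightarrow> upclosed X (\<lambda>p x. phi p x \<inter> psi p x)"
  unfolding upclosed_def by blast

lemma upclosed_union: "upclosed X phi \<Longrightarrow> upclosed X psi \<Longrightarrow> upclosed X (\<lambda>p x. phi p x \<union> psi p x)"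
  unfolding upclosed_def by blast

lemma continuous_char_witness:
  assumes phi: "continuous_D X Sig phi" and so: "sub_on X q D" and di: "dir_inh X q D"
    and s: "is_sup X q D s" and q: "q \<in> phi q s"
  shows "\<exists>x\<in>D q. q \<in> phi q x"
proof -
  note m = continuous_D_morph[OF phi]
  \<comment> \<open>The union of the sieves phi r y is an upper bound in Sigma, so it contains phi q s; a member
    containing the stage q itself must live at stage q.\<close>
  define u where "u = {t. \<exists>r\<le>q. \<exists>y\<in>D r. t \<in> phi r y}"
  have sieve: "t \<in> phi r y \<Longrightarrow> r \<le> q \<Longrightarrow> y \<in> D r \<Longrightarrow> t \<le> r \<and> (\<forall>t'\<le>t. t' \<in> phi r y)" for t r y
    using char_le[OF m sub_on_car[OF so]] char_down[OF m sub_on_car[OF so]] by blast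
  have u: "u \<in> car Sig q"
    unfolding car_Sig u_def using sieve order_trans by blast
  have "is_ub Sig q (\<lambda>r. phi r ` D r) u"
    unfolding is_ub_def
  proof (intro conjI allI impI u)
    fix r T assume "r \<le> q \<and> T \<in> phi r ` D r"
    then obtain y where r: "r \<le> q" and y: "y \<in> D r" and T: "T = phi r y"
      by blast
    have "T \<in> car Sig r"
      using morph_car[OF m sub_on_car[OF so r y]] T by simp
    moreover have "T \<subseteq> rs Sig q r u"
      unfolding rs_Sig u_def T using r y sieve by blast
    moreover have "rs Sig q r u \<in> car Sig r"
      using u unfolding car_Sig rs_Sig by auto
    ultimately show "le Sig r T (rs Sig q r u)"
      unfolding le_Sig by blast
  qed
  then have "rs Sig q q (phi q s) \<subseteq> u"
    using is_sup_least[OF continuous_D_sup[OF phi so di s] order_refl] unfolding le_Sig by blast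
  then have "q \<in> u"
    using q unfolding rs_Sig by blast
  then obtain r y where "r \<le> q" "y \<in> D r" "q \<in> phi r y"
    unfolding u_def by blast
  moreover from this have "q \<le> r"
    using sieve by blast
  ultimately show ?thesis
    using order_antisym by blast
qed

section \<open>Scott-open subdcpos\<close>

lemma car_sub_obj: "car (sub_obj X phi) p = {x \<in> car X p. p \<in> phi p x}"
  by (simp add: car_def sub_obj_def)

lemma rs_sub_obj: "rs (sub_obj X phi) = rs X"
  by (simp add: rs_def sub_obj_def)

lemma le_sub_obj: "le (sub_obj X phi) p x y \<longleftrightarrow> le X p x y \<and> p \<in> phi p x \<and> p \<in> phi p y"
  by (simp add: le_def sub_obj_def)

lemma sub_obj_rs_car:
  assumes X: "is_presheaf X" and phi: "is_morph X Sig phi"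
    and "q \<le> p" and x: "x \<in> car (sub_obj X phi) p"
  shows "rs X p q x \<in> car (sub_obj X phi) q"
proof -
  have "x \<in> car X p" "p \<in> phi p x"
    using x by (simp_all add: car_sub_obj)
  then show ?thesis
    using presheaf_rs_car[OF X \<open>q \<le> p\<close>] char_rs[OF phi \<open>q \<le> p\<close>]
      char_down[OF phi, of x p p q] \<open>q \<le> p\<close>
    by (simp add: car_sub_obj)
qed

lemma iposet_sub_obj:
  assumes X: "is_iposet X" and phi: "is_morph X Sig phi"
  shows "is_iposet (sub_obj X phi)"
proof -
  note ps = iposet_presheaf[OF X] and rs_car = sub_obj_rs_car[OF iposet_presheaf[OF X] phi]
  have "is_presheaf (sub_obj X phi)"
    unfolding is_presheaf_def rs_sub_obj
    using rs_car presheaf_rs_id[OF ps] presheaf_rs_rs[OF ps] by (auto simp: car_sub_obj)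
  moreover have "le (sub_obj X phi) q (rs X p q x) (rs X p q y)"
    if "q \<le> p" "le (sub_obj X phi) p x y" for p q x y
    using that iposet_le_rs[OF X] iposet_le_car[OF X] rs_car by (auto simp: le_sub_obj car_sub_obj)
  moreover have "le (sub_obj X phi) p x y \<Longrightarrow> x \<in> car (sub_obj X phi) p \<and> y \<in> car (sub_obj X phi) p"
    for p x y using iposet_le_car[OF X] unfolding le_sub_obj car_sub_obj by blast
  moreover have "x \<in> car (sub_obj X phi) p \<Longrightarrow> le (sub_obj X phi) p x x" for p x
    using iposet_refl[OF X] by (simp add: le_sub_obj car_sub_obj)
  moreover have "le (sub_obj X phi) p x y \<Longrightarrow> le (sub_obj X phi) p y z \<Longrightarrow> le (sub_obj X phi) p x z"
    for p x y z using iposet_trans[OF X] by (simp add: le_sub_obj) blast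
  moreover have "le (sub_obj X phi) p x y \<Longrightarrow> le (sub_obj X phi) p y x \<Longrightarrow> x = y"
    for p x y using iposet_antisym[OF X] unfolding le_sub_obj by blast
  ultimately show ?thesis
    unfolding is_iposet_def rs_sub_obj by (intro conjI allI impI; (elim conjE)?; metis)
qed

lemma induced_sub_sub_obj:
  assumes X: "is_iposet X" and psi: "is_morph X Sig psi"
    and psi_phi: "\<And>p x. x \<in> car X p \<Longrightarrow> p \<in> psi p x \<Longrightarrow> p \<in> phi p x"
  shows "induced_sub (sub_obj X psi) (sub_obj X phi)"
  unfolding induced_sub_def
  using iposet_le_car[OF X] sub_obj_rs_car[OF iposet_presheaf[OF X] psi] psi_phi
  by (auto simp: car_sub_obj rs_sub_obj le_sub_obj)

lemma induced_sub_sub_obj_top: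
  assumes X: "is_iposet X" and psi: "is_morph X Sig psi"
  shows "induced_sub (sub_obj X psi) X"
  unfolding induced_sub_def
  using iposet_le_car[OF X] sub_obj_rs_car[OF iposet_presheaf[OF X] psi]
  by (auto simp: car_sub_obj rs_sub_obj le_sub_obj)

lemma sub_on_sub_obj:
  "sub_on (sub_obj X phi) q D \<longleftrightarrow> sub_on X q D \<and> (\<forall>r. r \<le> q \<longrightarrow> D r \<subseteq> car (sub_obj X phi) r)"
  unfolding sub_on_def rs_sub_obj car_sub_obj by blast

lemma dir_inh_sub_obj: "dir_inh (sub_obj X phi) q D \<Longrightarrow> dir_inh X q D"
  unfolding dir_inh_def le_sub_obj by blast

lemma is_sup_mem_sub_obj:
  assumes X: "is_iposet X" and up: "upclosed X phi"
    and D: "dir_inh X q D" "D q \<subseteq> car (sub_obj X phi) q"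
    and s: "is_sup X q D s"
  shows "s \<in> car (sub_obj X phi) q"
proof -
  obtain x where x: "x \<in> D q"
    using D(1) unfolding dir_inh_def by blast
  then have "le X q x s"
    using is_sup_ub[OF s order_refl] presheaf_rs_id[OF iposet_presheaf[OF X] is_sup_car[OF s]]
    by simp
  moreover have "q \<in> phi q x"
    using x D(2) by (auto simp: car_sub_obj)
  ultimately show ?thesis
    using upclosedD[OF up] is_sup_car[OF s] by (simp add: car_sub_obj)
qed

lemma is_sup_sub_obj_exists:
  assumes X: "is_dcpo X" and phi: "is_morph X Sig phi" and up: "upclosed X phi"
    and so: "sub_on (sub_obj X phi) q D" and di: "dir_inh (sub_obj X phi) q D"
  obtains s where "is_sup X q D s" and "is_sup (sub_obj X phi) q D s"
proof -
  note Xi = dcpo_iposet[OF X] and di' = dir_inh_sub_obj[OF di]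
  have "sub_on X q D" and D: "\<And>r. r \<le> q \<Longrightarrow> D r \<subseteq> car (sub_obj X phi) r"
    using so unfolding sub_on_sub_obj by blast+
  then obtain s where s: "is_sup X q D s"
    using X di' unfolding is_dcpo_def by blast
  moreover have "is_sup (sub_obj X phi) q D s"
    using is_sup_induced_sub[OF induced_sub_sub_obj_top[OF Xi phi] s
        is_sup_mem_sub_obj[OF Xi up di' D[OF order_refl] s] D] .
  ultimately show ?thesis
    using that by blast
qed

lemma dcpo_sub_obj:
  assumes X: "is_dcpo X" and phi: "is_morph X Sig phi" and up: "upclosed X phi"
  shows "is_dcpo (sub_obj X phi)"
proof -
  have "\<exists>s. is_sup (sub_obj X phi) q D s"
    if "sub_on (sub_obj X phi) q D" and "dir_inh (sub_obj X phi) q D" for q D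
    using is_sup_sub_obj_exists[OF X phi up that] by metis
  then show ?thesis
    unfolding is_dcpo_def using iposet_sub_obj[OF dcpo_iposet[OF X] phi] by blast
qed

lemma is_sup_of_is_sup_sub_obj:
  assumes X: "is_dcpo X" and phi: "is_morph X Sig phi" and up: "upclosed X phi"
    and so: "sub_on (sub_obj X phi) q D" and di: "dir_inh (sub_obj X phi) q D"
    and s: "is_sup (sub_obj X phi) q D s"
  shows "is_sup X q D s"
proof -
  obtain s' where "is_sup X q D s'" and "is_sup (sub_obj X phi) q D s'"
    using is_sup_sub_obj_exists[OF X phi up so di] .
  moreover from this(2) have "s' = s"
    using is_sup_unique[OF iposet_sub_obj[OF dcpo_iposet[OF X] phi] _ s] by blast
  ultimately show ?thesis
    by simp
qed

lemma continuous_D_inclusion: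
  assumes X: "is_dcpo X" and phi: "is_morph X Sig phi" and up: "upclosed X phi"
    and psi: "is_morph X Sig psi" and phi_psi: "\<And>p x. x \<in> car X p \<Longrightarrow> p \<in> phi p x \<Longrightarrow> p \<in> psi p x"
  shows "continuous_D (sub_obj X phi) (sub_obj X psi) mid"
  unfolding continuous_D_def
proof (intro conjI allI impI)
  show "is_morph (sub_obj X phi) (sub_obj X psi) mid"
    unfolding is_morph_def mid_def rs_sub_obj car_sub_obj using phi_psi by auto
next
  fix q D s
  assume "sub_on (sub_obj X phi) q D \<and> dir_inh (sub_obj X phi) q D \<and> is_sup (sub_obj X phi) q D s"
  then have so: "sub_on (sub_obj X phi) q D" and di: "dir_inh (sub_obj X phi) q D"
    and s: "is_sup (sub_obj X phi) q D s" by blast+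
  have "s \<in> car (sub_obj X psi) q"
    using is_sup_car[OF s] phi_psi by (simp add: car_sub_obj)
  moreover have "\<And>r. r \<le> q \<Longrightarrow> D r \<subseteq> car (sub_obj X psi) r"
    using so phi_psi unfolding sub_on_sub_obj by (force simp: car_sub_obj)
  ultimately show "is_sup (sub_obj X psi) q (\<lambda>r. mid r ` D r) (mid q s)"
    using is_sup_induced_sub[OF induced_sub_sub_obj_top[OF dcpo_iposet[OF X] psi]
        is_sup_of_is_sup_sub_obj[OF X phi up so di s]]
    by (simp add: mid_def)
qed

lemma continuous_D_corestrict:
  assumes X: "is_iposet X" and psi: "is_morph X Sig psi"
    and psi_phi: "\<And>p x. x \<in> car X p \<Longrightarrow> p \<in> psi p x \<Longrightarrow> p \<in> phi p x"
    and f: "continuous_D Z (sub_obj X phi) f"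
    and into: "\<And>p x. x \<in> car Z p \<Longrightarrow> f p x \<in> car (sub_obj X psi) p"
  shows "continuous_D Z (sub_obj X psi) f"
  unfolding continuous_D_def
proof (intro conjI allI impI)
  show "is_morph Z (sub_obj X psi) f"
    unfolding is_morph_def rs_sub_obj
    using into morph_rs[OF continuous_D_morph[OF f]] by (simp add: rs_sub_obj)
next
  fix q D s assume "sub_on Z q D \<and> dir_inh Z q D \<and> is_sup Z q D s"
  then have so: "sub_on Z q D" and di: "dir_inh Z q D" and s: "is_sup Z q D s"
    by blast+
  have image_car: "f r ` D r \<subseteq> car (sub_obj X psi) r" if "r \<le> q" for r
    using into sub_on_car[OF so that] by blast
  show "is_sup (sub_obj X psi) q (\<lambda>r. f r ` D r) (f q s)"
    using is_sup_induced_sub[OF induced_sub_sub_obj[OF X psi psi_phi] continuous_D_sup[OF f so di s]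
        into[OF is_sup_car[OF s]] image_car] .
qed

section \<open>Gluing continuous maps along a union\<close>

definition fam_within :: "('l \<Rightarrow> 'a \<Rightarrow> 'l set) \<Rightarrow> ('l \<Rightarrow> 'a set) \<Rightarrow> 'l \<Rightarrow> 'a set" where
  "fam_within phi D r = {x \<in> D r. r \<in> phi r x}"

lemma sub_on_fam_within:
  assumes "is_presheaf X" "is_morph X Sig phi" "sub_on X q D"
  shows "sub_on (sub_obj X phi) q (fam_within phi D)"
  unfolding sub_on_def rs_sub_obj fam_within_def
  using sub_on_car[OF assms(3)] sub_on_rs[OF assms(3)] sub_obj_rs_car[OF assms(1,2)]
  by (auto simp: car_sub_obj)

lemma dir_inh_fam_within:
  assumes up: "upclosed X phi" and di: "dir_inh X q D" and x0: "x0 \<in> D q" "q \<in> phi q x0"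
  shows "dir_inh (sub_obj X phi) q (fam_within phi D)"
  unfolding dir_inh_def
proof (intro conjI allI impI)
  show "fam_within phi D q \<noteq> {}"
    using x0 unfolding fam_within_def by blast
next
  fix r x y assume "r \<le> q \<and> x \<in> fam_within phi D r \<and> y \<in> fam_within phi D r"
  then obtain z where "z \<in> D r" "le X r x z" "le X r y z" "r \<in> phi r x" "r \<in> phi r y"
    using di unfolding dir_inh_def fam_within_def by blast
  then show "\<exists>z\<in>fam_within phi D r. le (sub_obj X phi) r x z \<and> le (sub_obj X phi) r y z"
    using upclosedD[OF up] unfolding fam_within_def le_sub_obj by blast
qed

lemma fam_within_cofinal:
  assumes X: "is_iposet X" and phi: "is_morph X Sig phi" and up: "upclosed X phi"
    and so: "sub_on X q D" and di: "dir_inh X q D" and x0: "x0 \<in> D q" "q \<in> phi q x0"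
    and r: "r \<le> q" and x: "x \<in> D r"
  shows "\<exists>z\<in>fam_within phi D r. le X r x z"
proof -
  have "rs X q r x0 \<in> D r"
    using sub_on_rs[OF so r order_refl x0(1)] .
  then obtain z where z: "z \<in> D r" "le X r x z" "le X r (rs X q r x0) z"
    using di r x unfolding dir_inh_def by blast
  have "x0 \<in> car (sub_obj X phi) q"
    using sub_on_car[OF so order_refl x0(1)] x0(2) by (simp add: car_sub_obj)
  then have "r \<in> phi r (rs X q r x0)"
    using sub_obj_rs_car[OF iposet_presheaf[OF X] phi r] by (simp add: car_sub_obj)
  then have "r \<in> phi r z"
    by (rule upclosedD[OF up z(3)])
  then show ?thesis
    using z unfolding fam_within_def by blast
qed

lemma glued_mono:
  assumes X: "is_iposet X" and phi1: "is_morph X Sig phi1" and phi2: "is_morph X Sig phi2"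
    and up1: "upclosed X phi1" and up2: "upclosed X phi2" and Z: "is_presheaf Z"
    and z1: "continuous_D (sub_obj X phi1) Z z1" and z2: "continuous_D (sub_obj X phi2) Z z2"
    and h1: "\<And>p x. x \<in> car (sub_obj X phi1) p \<Longrightarrow> h p x = z1 p x"
    and h2: "\<And>p x. x \<in> car (sub_obj X phi2) p \<Longrightarrow> h p x = z2 p x"
    and xz: "le (sub_obj X (\<lambda>p x. phi1 p x \<union> phi2 p x)) r x z"
  shows "le Z r (h r x) (h r z)"
proof -
  have le: "le X r x z" and xz_car: "x \<in> car X r" "z \<in> car X r"
    using xz iposet_le_car[OF X] unfolding le_sub_obj by blast+
  consider "r \<in> phi1 r x" | "r \<in> phi2 r x"
    using xz unfolding le_sub_obj by blast
  then show ?thesis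
  proof cases
    case 1
    then have "le (sub_obj X phi1) r x z"
      using le upclosedD[OF up1 le] unfolding le_sub_obj by blast
    then show ?thesis
      using continuous_D_mono[OF iposet_sub_obj[OF X phi1] Z z1] h1 xz_car
      by (simp add: le_sub_obj car_sub_obj)
  next
    case 2
    then have "le (sub_obj X phi2) r x z"
      using le upclosedD[OF up2 le] unfolding le_sub_obj by blast
    then show ?thesis
      using continuous_D_mono[OF iposet_sub_obj[OF X phi2] Z z2] h2 xz_car
      by (simp add: le_sub_obj car_sub_obj)
  qed
qed

lemma is_sup_glued:
  assumes X: "is_dcpo X" and c1: "continuous_D X Sig phi1" and c2: "continuous_D X Sig phi2"
    and Z: "is_iposet Z"
    and z1: "continuous_D (sub_obj X phi1) Z z1" and z2: "continuous_D (sub_obj X phi2) Z z2"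
    and h1: "\<And>p x. x \<in> car (sub_obj X phi1) p \<Longrightarrow> h p x = z1 p x"
    and h2: "\<And>p x. x \<in> car (sub_obj X phi2) p \<Longrightarrow> h p x = z2 p x"
    and so: "sub_on (sub_obj X (\<lambda>p x. phi1 p x \<union> phi2 p x)) q D" and di: "dir_inh X q D"
    and s: "is_sup X q D s" and s1: "q \<in> phi1 q s"
  shows "is_sup Z q (\<lambda>r. h r ` D r) (h q s)"
proof -
  note Xi = dcpo_iposet[OF X]
  note phi1 = continuous_D_morph[OF c1] and phi2 = continuous_D_morph[OF c2]
  note up1 = upclosed_continuous[OF Xi c1] and up2 = upclosed_continuous[OF Xi c2]
  have soX: "sub_on X q D" and DJ: "\<And>r. r \<le> q \<Longrightarrow> D r \<subseteq> car (sub_obj X (\<lambda>p x. phi1 p x \<union> phi2 p x)) r"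
    using so unfolding sub_on_sub_obj by blast+
  obtain x0 where x0: "x0 \<in> D q" "q \<in> phi1 q x0"
    using continuous_char_witness[OF c1 soX di s s1] by blast
  let ?D1 = "fam_within phi1 D"
  have D1_D: "?D1 r \<subseteq> D r" for r
    unfolding fam_within_def by blast
  note cofinal = fam_within_cofinal[OF Xi phi1 up1 soX di x0]
  have D1_car: "?D1 r \<subseteq> car (sub_obj X phi1) r" if "r \<le> q" for r
    using sub_on_car[OF soX that] unfolding fam_within_def car_sub_obj by blast
  have s_car: "s \<in> car (sub_obj X phi1) q"
    using is_sup_car[OF s] s1 by (simp add: car_sub_obj)
  have "is_sup X q ?D1 s"
    using is_sup_cofinal_iff[OF Xi D1_D cofinal] s by blast
  then have "is_sup (sub_obj X phi1) q ?D1 s"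
    using is_sup_induced_sub[OF induced_sub_sub_obj_top[OF Xi phi1] _ s_car D1_car] by blast
  then have sup1: "is_sup Z q (\<lambda>r. z1 r ` ?D1 r) (h q s)"
    using continuous_D_sup[OF z1 sub_on_fam_within[OF iposet_presheaf[OF Xi] phi1 soX]
        dir_inh_fam_within[OF up1 di x0]] h1[OF s_car] by simp
  have image_sub: "z1 r ` ?D1 r \<subseteq> h r ` D r" if "r \<le> q" for r
    using D1_car[OF that] h1 D1_D by (force simp: image_iff)
  have image_cofinal: "\<exists>w\<in>z1 r ` ?D1 r. le Z r y w" if r: "r \<le> q" and y: "y \<in> h r ` D r" for r y
  proof -
    obtain x where x: "x \<in> D r" and y: "y = h r x"
      using y by blast
    obtain z where z: "z \<in> ?D1 r" and xz: "le X r x z"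
      using cofinal[OF r x] by blast
    have "le (sub_obj X (\<lambda>p x. phi1 p x \<union> phi2 p x)) r x z"
      using xz x z DJ[OF r] D1_D unfolding le_sub_obj car_sub_obj by blast
    with h1 h2 have "le Z r y (h r z)"
      unfolding y by (rule glued_mono[OF Xi phi1 phi2 up1 up2 iposet_presheaf[OF Z] z1 z2])
    moreover have "h r z = z1 r z"
      using h1 D1_car[OF r] z by blast
    ultimately show ?thesis
      using z by blast
  qed
  show ?thesis
    using sup1 is_sup_cofinal_iff[OF Z image_sub image_cofinal] by simp
qed

lemma continuous_D_glue:
  assumes X: "is_dcpo X" and c1: "continuous_D X Sig phi1" and c2: "continuous_D X Sig phi2"
    and Z: "is_iposet Z"
    and z1: "continuous_D (sub_obj X phi1) Z z1" and z2: "continuous_D (sub_obj X phi2) Z z2"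
    and h1: "\<And>p x. x \<in> car (sub_obj X phi1) p \<Longrightarrow> h p x = z1 p x"
    and h2: "\<And>p x. x \<in> car (sub_obj X phi2) p \<Longrightarrow> h p x = z2 p x"
  shows "continuous_D (sub_obj X (\<lambda>p x. phi1 p x \<union> phi2 p x)) Z h"
proof -
  note Xi = dcpo_iposet[OF X]
  note phi1 = continuous_D_morph[OF c1] and phi2 = continuous_D_morph[OF c2]
  let ?J = "sub_obj X (\<lambda>p x. phi1 p x \<union> phi2 p x)"
  have cases: "x \<in> car (sub_obj X phi1) p \<or> x \<in> car (sub_obj X phi2) p" if "x \<in> car ?J p" for p x
    using that by (auto simp: car_sub_obj)
  have piece: "h p x \<in> car Z p \<and> h q (rs X p q x) = rs Z p q (h p x)"
    if "q \<le> p" "x \<in> car (sub_obj X phi) p"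
      and "continuous_D X Sig phi" "continuous_D (sub_obj X phi) Z g"
      and hg: "\<And>p x. x \<in> car (sub_obj X phi) p \<Longrightarrow> h p x = g p x" for phi g p q x
  proof -
    have "rs X p q x \<in> car (sub_obj X phi) q"
      using sub_obj_rs_car[OF iposet_presheaf[OF Xi] continuous_D_morph[OF that(3)] that(1,2)] .
    then show ?thesis
      using hg that(2) morph_car[OF continuous_D_morph[OF that(4)] that(2)]
        morph_rs[OF continuous_D_morph[OF that(4)] that(1,2)]
      by (simp add: rs_sub_obj)
  qed
  have "is_morph ?J Z h"
    unfolding is_morph_def rs_sub_obj
  proof (intro conjI allI impI)
    fix p x assume "x \<in> car ?J p"
    then show "h p x \<in> car Z p"
      using cases piece[OF order_refl _ c1 z1 h1] piece[OF order_refl _ c2 z2 h2] by blast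
  next
    fix p q x assume "q \<le> p \<and> x \<in> car ?J p"
    then show "h q (rs X p q x) = rs Z p q (h p x)"
      using cases piece[OF _ _ c1 z1 h1] piece[OF _ _ c2 z2 h2] by blast
  qed
  moreover have "is_sup Z q (\<lambda>r. h r ` D r) (h q s)"
    if so: "sub_on ?J q D" and di: "dir_inh ?J q D" and s: "is_sup ?J q D s" for q D s
  proof -
    have "is_sup X q D s"
      using is_sup_of_is_sup_sub_obj[OF X is_morph_Sig_union[OF phi1 phi2]
          upclosed_union[OF upclosed_continuous[OF Xi c1] upclosed_continuous[OF Xi c2]] so di s] .
    moreover have "q \<in> phi1 q s \<or> q \<in> phi2 q s"
      using is_sup_car[OF s] by (simp add: car_sub_obj)
    moreover have "sub_on (sub_obj X (\<lambda>p x. phi2 p x \<union> phi1 p x)) q D"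
      using so by (simp add: Un_commute)
    ultimately show ?thesis
      using is_sup_glued[OF X c1 c2 Z z1 z2 h1 h2 so dir_inh_sub_obj[OF di]]
        is_sup_glued[OF X c2 c1 Z z2 z1 h2 h1 _ dir_inh_sub_obj[OF di]] by blast
  qed
  ultimately show ?thesis
    unfolding continuous_D_def by blast
qed

section \<open>The square of inclusions\<close>

lemma inclusion_square:
  assumes X: "is_dcpo X" and cU: "continuous_D X Sig phiU" and cV: "continuous_D X Sig phiV"
  defines "I \<equiv> sub_obj X (\<lambda>p x. phiU p x \<inter> phiV p x)"
    and "J \<equiv> sub_obj X (\<lambda>p x. phiU p x \<union> phiV p x)"
  shows "is_dcpo I \<and> is_dcpo (sub_obj X phiU) \<and> is_dcpo (sub_obj X phiV) \<and> is_dcpo J \<and>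
    continuous_D I (sub_obj X phiU) mid \<and> continuous_D I (sub_obj X phiV) mid \<and>
    continuous_D (sub_obj X phiU) J mid \<and> continuous_D (sub_obj X phiV) J mid \<and>
    meq I (mcomp mid mid) (mcomp mid mid)"
proof -
  note Xi = dcpo_iposet[OF X]
  note mU = continuous_D_morph[OF cU] and mV = continuous_D_morph[OF cV]
  note upU = upclosed_continuous[OF Xi cU] and upV = upclosed_continuous[OF Xi cV]
  note mI = is_morph_Sig_inter[OF mU mV] and upI = upclosed_inter[OF upU upV]
  note mJ = is_morph_Sig_union[OF mU mV] and upJ = upclosed_union[OF upU upV]
  show ?thesis
    unfolding I_def J_def
    using dcpo_sub_obj[OF X mI upI] dcpo_sub_obj[OF X mU upU] dcpo_sub_obj[OF X mV upV]
      dcpo_sub_obj[OF X mJ upJ]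
      continuous_D_inclusion[OF X mI upI mU] continuous_D_inclusion[OF X mI upI mV]
      continuous_D_inclusion[OF X mU upU mJ] continuous_D_inclusion[OF X mV upV mJ]
    by (simp add: meq_def)
qed

lemma pullback_sub_obj:
  fixes X :: "('l::order, 'a) pobj"
  assumes X: "is_dcpo X" and cU: "continuous_D X Sig phiU" and cV: "continuous_D X Sig phiV"
  shows "is_pullback_D TYPE('z)
           (sub_obj X (\<lambda>p x. phiU p x \<inter> phiV p x)) (sub_obj X phiU) (sub_obj X phiV)
           (sub_obj X (\<lambda>p x. phiU p x \<union> phiV p x)) mid mid mid mid"
proof -
  let ?I = "sub_obj X (\<lambda>p x. phiU p x \<inter> phiV p x)"
  have "\<exists>h. continuous_D Z ?I h \<and> meq Z h za \<and> meq Z h zb \<and>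
          (\<forall>h'. continuous_D Z ?I h' \<and> meq Z h' za \<and> meq Z h' zb \<longrightarrow> meq Z h h')"
    if za: "continuous_D Z (sub_obj X phiU) za" and zb: "continuous_D Z (sub_obj X phiV) zb"
      and eq: "meq Z za zb" for Z :: "('l, 'z) pobj" and za zb
  proof (intro exI conjI allI impI)
    have "za p x \<in> car ?I p" if "x \<in> car Z p" for p x
      using morph_car[OF continuous_D_morph[OF za] that] morph_car[OF continuous_D_morph[OF zb] that]
        eq that
      by (simp add: car_sub_obj meq_def)
    moreover note mI = is_morph_Sig_inter[OF continuous_D_morph[OF cU] continuous_D_morph[OF cV]]
    ultimately show "continuous_D Z ?I za"
      using continuous_D_corestrict[OF dcpo_iposet[OF X] mI _ za] by blast
    show "meq Z za za" "meq Z za zb"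
      using eq by (simp_all add: meq_def)
    show "meq Z za h'" if "continuous_D Z ?I h' \<and> meq Z h' za \<and> meq Z h' zb" for h'
      using that by (simp add: meq_def)
  qed
  then show ?thesis
    unfolding is_pullback_D_def using inclusion_square[OF assms] by simp
qed

lemma pushout_sub_obj:
  fixes X :: "('l::order, 'a) pobj"
  assumes X: "is_dcpo X" and cU: "continuous_D X Sig phiU" and cV: "continuous_D X Sig phiV"
  shows "is_pushout_D TYPE('z)
           (sub_obj X (\<lambda>p x. phiU p x \<inter> phiV p x)) (sub_obj X phiU) (sub_obj X phiV)
           (sub_obj X (\<lambda>p x. phiU p x \<union> phiV p x)) mid mid mid mid"
proof -
  let ?J = "sub_obj X (\<lambda>p x. phiU p x \<union> phiV p x)"
  have "\<exists>h. continuous_D ?J Z h \<and> meq (sub_obj X phiU) h za \<and> meq (sub_obj X phiV) h zb \<and>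
          (\<forall>h'. continuous_D ?J Z h' \<and> meq (sub_obj X phiU) h' za \<and> meq (sub_obj X phiV) h' zb
                \<longrightarrow> meq ?J h h')"
    if Z: "is_dcpo Z"
      and za: "continuous_D (sub_obj X phiU) Z za" and zb: "continuous_D (sub_obj X phiV) Z zb"
      and eq: "meq (sub_obj X (\<lambda>p x. phiU p x \<inter> phiV p x)) za zb" for Z :: "('l, 'z) pobj" and za zb
  proof (intro exI conjI allI impI)
    define h where "h p x = (if p \<in> phiU p x then za p x else zb p x)" for p x
    have hU: "h p x = za p x" if "x \<in> car (sub_obj X phiU) p" for p x
      using that by (simp add: h_def car_sub_obj)
    have hV: "h p x = zb p x" if "x \<in> car (sub_obj X phiV) p" for p x
      using that eq by (auto simp: h_def car_sub_obj meq_def)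
    show "continuous_D ?J Z h"
      using continuous_D_glue[OF X cU cV dcpo_iposet[OF Z] za zb hU hV] .
    show "meq (sub_obj X phiU) h za" "meq (sub_obj X phiV) h zb"
      using hU hV by (simp_all add: meq_def)
    show "meq ?J h h'"
      if "continuous_D ?J Z h' \<and> meq (sub_obj X phiU) h' za \<and> meq (sub_obj X phiV) h' zb" for h'
      using that hU hV by (auto simp: meq_def car_sub_obj)
  qed
  then show ?thesis
    unfolding is_pushout_D_def using inclusion_square[OF assms] by simp
qed

theorem mainTheorem8:
  fixes X :: "('l::bounded_semilattice_inf_top, 'a) pobj"
    and phiU phiV :: "'l \<Rightarrow> 'a \<Rightarrow> 'l set"
  assumes "is_dcpo X"
    and "continuous_D X Sig phiU"
    and "continuous_D X Sig phiV"
  shows "is_pullback_D TYPE('z)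
           (sub_obj X (\<lambda>p x. phiU p x \<inter> phiV p x)) (sub_obj X phiU) (sub_obj X phiV)
           (sub_obj X (\<lambda>p x. phiU p x \<union> phiV p x)) mid mid mid mid
       \<and> is_pushout_D TYPE('w)
           (sub_obj X (\<lambda>p x. phiU p x \<inter> phiV p x)) (sub_obj X phiU) (sub_obj X phiV)
           (sub_obj X (\<lambda>p x. phiU p x \<union> phiV p x)) mid mid mid mid"
  using pullback_sub_obj[OF assms] pushout_sub_obj[OF assms] by (rule conjI)

end
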